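(* Let $(X,d)$ be a metric space and let $u,u_1,u_2,\ldots\in F_{USC}(X)$. Then: (i) If there is a dense subset $P$ of $(0,1)$ such that $[u_n]_\alpha$ Kuratowski converges to $[u]_\alpha$ for every $\alpha\in P$, then $u_n\stackrel{\Gamma}{\longrightarrow}u$. (ii) If $u_n\stackrel{\Gamma}{\longrightarrow}u$, then $[u_n]_\alpha$ Kuratowski converges to $[u]_\alpha$ for all $\alpha\in(0,1)\setminus P(u)$.
   Context: A fuzzy set on $X$ is a function $u:X\to[0,1]$, with $\alpha$-cuts $[u]_\alpha=\{x: u(x)\ge\alpha\}$ for $\alpha\in(0,1]$ and $[u]_0=\overline{\{u>0\}}$. $F_{USC}(X)$ is the set of fuzzy sets with all $\alpha$-cuts ($\alpha\in[0,1]$) non-empty and closed. For sets $C_n\subseteq X$: $\liminf_n C_n=\{x: x=\lim_n x_n, x_n\in C_n\}$, $\limsup_n C_n=\{x: x=\lim_j x_{n_j}, x_{n_j}\in C_{n_j}\}$; $C_n$ Kuratowski converges to $C$ if $C=\liminf_n C_n=\limsup_n C_n$. ${\rm end}\,u=\{(x,t)\in X\times[0,1]: u(x)\ge t\}$, with $X\times[0,1]$ metrized by $\overline{d}((x,\alpha),(y,\beta))=d(x,y)+|\alpha-\beta|$. $u_n\stackrel{\Gamma}{\longrightarrow}u$ means ${\rm end}\,u_n$ Kuratowski converges to ${\rm end}\,u$. A number $\alpha\in(0,1)$ is a platform point of $u$ if $\overline{\{u>\alpha\}}\subsetneqq[u]_\alpha$; $P(u)$ denotes the set of platform points of $u$.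 *)

theory Defs
  imports "HOL-Analysis.Analysis"
begin

definition fuzzy :: "('a \<Rightarrow> real) \<Rightarrow> bool" where
  "fuzzy u \<longleftrightarrow> (\<forall>x. 0 \<le> u x \<and> u x \<le> 1)"

definition cut :: "('a::topological_space \<Rightarrow> real) \<Rightarrow> real \<Rightarrow> 'a set" where
  "cut u \<alpha> = (if \<alpha> = 0 then closure {x. u x > 0} else {x. u x \<ge> \<alpha>})"

definition FUSC :: "('a::topological_space \<Rightarrow> real) \<Rightarrow> bool" where
  "FUSC u \<longleftrightarrow> fuzzy u \<and> (\<forall>\<alpha>\<in>{0..1}. cut u \<alpha> \<noteq> {} \<and> closed (cut u \<alpha>))"

definition kliminf :: "(nat \<Rightarrow> 'b::topological_space set) \<Rightarrow> 'b set" where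
  "kliminf C = {x. \<exists>xs. (\<forall>n. xs n \<in> C n) \<and> xs \<longlonglongrightarrow> x}"

definition klimsup :: "(nat \<Rightarrow> 'b::topological_space set) \<Rightarrow> 'b set" where
  "klimsup C = {x. \<exists>r xs. strict_mono r \<and> (\<forall>j. xs j \<in> C (r j)) \<and> xs \<longlonglongrightarrow> x}"

definition kconv :: "(nat \<Rightarrow> 'b::topological_space set) \<Rightarrow> 'b set \<Rightarrow> bool" where
  "kconv C A \<longleftrightarrow> A = kliminf C \<and> A = klimsup C"

definition endo :: "('a \<Rightarrow> real) \<Rightarrow> ('a \<times> real) set" where
  "endo u = {(x, t). t \<in> {0..1} \<and> u x \<ge> t}"

definition gamma_conv :: "(nat \<Rightarrow> 'a::metric_space \<Rightarrow> real) \<Rightarrow> ('a \<Rightarrow> real) \<Rightarrow> bool" where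
  "gamma_conv us u \<longleftrightarrow> kconv (\<lambda>n. endo (us n)) (endo u)"

definition platform_points :: "('a::topological_space \<Rightarrow> real) \<Rightarrow> real set" where
  "platform_points u = {\<alpha>. 0 < \<alpha> \<and> \<alpha> < 1 \<and> closure {x. u x > \<alpha>} \<subset> cut u \<alpha>}"

end

theory Submission
  imports Defs
begin

text \<open>
  Kuratowski lower limits in a metric space are closed, and this drives both parts.
  (i) A point \<open>(x, t)\<close> of \<open>end u\<close> with \<open>t > 0\<close> is the limit of points \<open>(x, p)\<close> with
  \<open>p \<in> P\<close>, \<open>p < t\<close>; each of them lies in the lower limit of the endographs because
  \<open>x \<in> [u]\<^sub>p\<close>. Conversely, a point \<open>(x, t)\<close> of the upper limit with \<open>u x < t\<close> would, for
  \<open>p \<in> P\<close> between \<open>u x\<close> and \<open>t\<close>, put \<open>x\<close> into the upper limit of the cuts \<open>[u\<^sub>n]\<^sub>p\<close>.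
  (ii) The upper limit of the cuts at level \<open>\<alpha>\<close> is the slice at height \<open>\<alpha>\<close> of the upper limit
  of the endographs. For the lower limit, approximations of \<open>(y, u y)\<close> in \<open>end u\<^sub>n\<close>
  eventually lie above height \<open>\<alpha>\<close> when \<open>u y > \<alpha>\<close>; and if \<open>\<alpha>\<close> is not a platform point,
  such \<open>y\<close> are dense in \<open>[u]\<^sub>\<alpha>\<close>.
\<close>

lemma kliminf_subset_klimsup: "kliminf C \<subseteq> klimsup C"
proof
  fix x assume "x \<in> kliminf C"
  then obtain xs where "\<forall>n. xs n \<in> C n" "xs \<longlonglongrightarrow> x" unfolding kliminf_def by blast
  then show "x \<in> klimsup C" unfolding klimsup_def
    by (intro CollectI exI[of _ id] exI[of _ xs]) (auto simp: strict_mono_def)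
qed

lemma kconv_iff_subset: "kconv C A \<longleftrightarrow> A \<subseteq> kliminf C \<and> klimsup C \<subseteq> A"
  unfolding kconv_def using kliminf_subset_klimsup[of C] by blast

text \<open>Membership in \<^const>\<open>kliminf\<close> needs a point in every \<open>C n\<close>, not only in
  almost all of them; hence the nonemptiness hypotheses here and below.\<close>

lemma kliminf_eventually:
  assumes ne: "\<And>n. C n \<noteq> {}"
    and mem: "eventually (\<lambda>n. xs n \<in> C n) sequentially" and lim: "xs \<longlonglongrightarrow> x"
  shows "x \<in> kliminf C"
proof -
  define ys where "ys n = (if xs n \<in> C n then xs n else (SOME y. y \<in> C n))" for n
  have "ys n \<in> C n" for n
    using ne[of n] by (auto simp: ys_def intro: someI_ex)
  moreover have "ys \<longlonglongrightarrow> x"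
    using lim by (rule Lim_transform_eventually) (use mem in \<open>auto simp: ys_def elim: eventually_mono\<close>)
  ultimately show ?thesis unfolding kliminf_def by blast
qed

lemma klimsup_eventually:
  assumes r: "strict_mono r"
    and mem: "eventually (\<lambda>j. xs j \<in> C (r j)) sequentially" and lim: "xs \<longlonglongrightarrow> x"
  shows "x \<in> klimsup C"
proof -
  obtain J where J: "\<And>j. j \<ge> J \<Longrightarrow> xs j \<in> C (r j)"
    using mem unfolding eventually_sequentially by blast
  have "strict_mono (\<lambda>j. r (j + J))" using r by (simp add: strict_mono_def)
  moreover have "(\<lambda>j. xs (j + J)) \<longlonglongrightarrow> x" using LIMSEQ_ignore_initial_segment[OF lim] .
  ultimately show ?thesis
    unfolding klimsup_def using J by (intro CollectI exI[of _ "\<lambda>j. r (j + J)"] exI) auto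
qed

lemma kliminf_if_eventually_dist_less:
  fixes C :: "nat \<Rightarrow> 'b::metric_space set"
  assumes ne: "\<And>n. C n \<noteq> {}"
    and near: "\<And>e. e > 0 \<Longrightarrow> eventually (\<lambda>n. \<exists>y\<in>C n. dist y x < e) sequentially"
  shows "x \<in> kliminf C"
proof -
  have infdist_lim: "(\<lambda>n. infdist x (C n)) \<longlonglongrightarrow> 0"
  proof (rule tendstoI)
    fix e :: real assume "e > 0"
    from near[OF this] show "eventually (\<lambda>n. dist (infdist x (C n)) 0 < e) sequentially"
    proof eventually_elim
      case (elim n)
      then obtain y where "y \<in> C n" "dist y x < e" by blast
      then have "infdist x (C n) < e" using infdist_le[of y "C n" x] by (simp add: dist_commute)
      then show ?case using infdist_nonneg[of x "C n"] by simp
    qed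
  qed
  have "\<forall>n. \<exists>y. y \<in> C n \<and> dist y x \<le> infdist x (C n) + 1 / Suc n"
  proof
    fix n
    have "(INF y\<in>C n. dist x y) < infdist x (C n) + 1 / Suc n"
      using infdist_notempty[OF ne[of n]] by simp
    then obtain y where "y \<in> C n" "dist x y < infdist x (C n) + 1 / Suc n"
      using cINF_less_iff[OF ne[of n] bdd_below_image_dist] by blast
    then show "\<exists>y. y \<in> C n \<and> dist y x \<le> infdist x (C n) + 1 / Suc n"
      by (auto simp: dist_commute)
  qed
  then obtain xs where xs: "\<forall>n. xs n \<in> C n \<and> dist (xs n) x \<le> infdist x (C n) + 1 / Suc n"
    by (auto dest: choice)
  then have "\<forall>n. norm (dist (xs n) x) \<le> infdist x (C n) + 1 / Suc n"
    by simp
  moreover have "(\<lambda>n. infdist x (C n) + 1 / Suc n) \<longlonglongrightarrow> 0"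
    using tendsto_add[OF infdist_lim LIMSEQ_Suc[OF lim_1_over_n]] by simp
  ultimately have "(\<lambda>n. dist (xs n) x) \<longlonglongrightarrow> 0"
    by (rule Lim_null_comparison[OF always_eventually])
  then have "xs \<longlonglongrightarrow> x" by (rule tendsto_dist_iff[THEN iffD2])
  then show ?thesis unfolding kliminf_def using xs by blast
qed

lemma closed_kliminf:
  fixes C :: "nat \<Rightarrow> 'b::metric_space set"
  shows "closed (kliminf C)"
proof (cases "kliminf C = {}")
  case False
  then have ne: "C n \<noteq> {}" for n unfolding kliminf_def by blast
  have "z \<in> kliminf C" if z: "z \<in> closure (kliminf C)" for z
  proof (rule kliminf_if_eventually_dist_less[OF ne])
    fix e :: real assume "e > 0"
    then obtain w where "w \<in> kliminf C" and wz: "dist w z < e / 2"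
      using z unfolding closure_approachable by (meson half_gt_zero)
    then obtain ws where ws: "\<And>n. ws n \<in> C n" and "ws \<longlonglongrightarrow> w"
      unfolding kliminf_def by blast
    then have "eventually (\<lambda>n. dist (ws n) w < e / 2) sequentially"
      using \<open>e > 0\<close> by (intro tendstoD) simp_all
    then show "eventually (\<lambda>n. \<exists>y\<in>C n. dist y z < e) sequentially"
    proof eventually_elim
      case (elim n)
      then have "dist (ws n) z < e" using wz dist_triangle[of "ws n" z w] by linarith
      with ws[of n] show ?case by blast
    qed
  qed
  then have "closure (kliminf C) \<subseteq> kliminf C" by blast
  then show ?thesis by (simp add: closure_subset_eq)
qed simp

lemma mem_endo_iff [simp]: "(x, t) \<in> endo u \<longleftrightarrow> 0 \<le> t \<and> t \<le> 1 \<and> t \<le> u x"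
  unfolding endo_def by auto

lemma cut_eq_ge: "\<alpha> > 0 \<Longrightarrow> cut u \<alpha> = {x. \<alpha> \<le> u x}"
  unfolding cut_def by simp

lemma closure_gt_eq_cut:
  assumes "closed (cut u \<alpha>)" and "0 < \<alpha>" "\<alpha> < 1" and "\<alpha> \<notin> platform_points u"
  shows "closure {x. \<alpha> < u x} = cut u \<alpha>"
proof -
  have "closure {x. \<alpha> < u x} \<subseteq> cut u \<alpha>"
    using assms(1,2) by (intro closure_minimal) (auto simp: cut_eq_ge)
  then show ?thesis using assms(2-4) unfolding platform_points_def by auto
qed

lemma klimsup_endo_subset:
  fixes u :: "'a::topological_space \<Rightarrow> real"
  assumes "fuzzy u" and "P \<subseteq> {0<..}"
    and dense: "\<forall>a b. 0 \<le> a \<and> a < b \<and> b \<le> 1 \<longrightarrow> (\<exists>p\<in>P. a < p \<and> p < b)"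
    and cuts: "\<forall>\<alpha>\<in>P. klimsup (\<lambda>n. cut (us n) \<alpha>) \<subseteq> cut u \<alpha>"
  shows "klimsup (\<lambda>n. endo (us n)) \<subseteq> endo u"
proof clarify
  fix x t assume "(x, t) \<in> klimsup (\<lambda>n. endo (us n))"
  then obtain r zs where r: "strict_mono r" and zs: "\<And>j. zs j \<in> endo (us (r j))"
    and lim: "zs \<longlonglongrightarrow> (x, t)"
    unfolding klimsup_def by blast
  have xlim: "(\<lambda>j. fst (zs j)) \<longlonglongrightarrow> x" and tlim: "(\<lambda>j. snd (zs j)) \<longlonglongrightarrow> t"
    using tendsto_fst[OF lim] tendsto_snd[OF lim] by simp_all
  have zs_bounds: "0 \<le> snd (zs j) \<and> snd (zs j) \<le> 1 \<and> snd (zs j) \<le> us (r j) (fst (zs j))" for j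
    using zs[of j] by (cases "zs j") simp
  have "0 \<le> t" "t \<le> 1"
    using tendsto_lowerbound[OF tlim] tendsto_upperbound[OF tlim] zs_bounds by auto
  moreover have "t \<le> u x"
  proof (rule ccontr)
    assume "\<not> t \<le> u x"
    moreover have "0 \<le> u x" using \<open>fuzzy u\<close> unfolding fuzzy_def by simp
    ultimately obtain p where p: "p \<in> P" "u x < p" "p < t"
      using dense \<open>t \<le> 1\<close> by (meson not_le)
    have "p > 0" using p(1) assms(2) by auto
    have "eventually (\<lambda>j. fst (zs j) \<in> cut (us (r j)) p) sequentially"
      using order_tendstoD(1)[OF tlim p(3)]
    proof eventually_elim
      case (elim j)
      then show ?case using zs_bounds[of j] \<open>p > 0\<close> by (simp add: cut_eq_ge)
    qed
    then have "x \<in> klimsup (\<lambda>n. cut (us n) p)"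
      by (rule klimsup_eventually[OF r _ xlim])
    then have "x \<in> cut u p" using cuts p(1) by blast
    then show False using p(2) \<open>p > 0\<close> by (simp add: cut_eq_ge)
  qed
  ultimately show "(x, t) \<in> endo u" by simp
qed

lemma endo_subset_kliminf_endo:
  fixes u :: "'a::metric_space \<Rightarrow> real"
  assumes fuzzy: "\<And>n. fuzzy (us n)" and "P \<subseteq> {0<..<1}"
    and dense: "\<forall>a b. 0 \<le> a \<and> a < b \<and> b \<le> 1 \<longrightarrow> (\<exists>p\<in>P. a < p \<and> p < b)"
    and cuts: "\<forall>\<alpha>\<in>P. cut u \<alpha> \<subseteq> kliminf (\<lambda>n. cut (us n) \<alpha>)"
  shows "endo u \<subseteq> kliminf (\<lambda>n. endo (us n))"
proof clarify
  fix x t assume "(x, t) \<in> endo u"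
  then have t: "0 \<le> t" "t \<le> 1" "t \<le> u x" by simp_all
  have bottom: "(y, 0) \<in> endo (us n)" for y n
    using fuzzy[of n] unfolding fuzzy_def by simp
  show "(x, t) \<in> kliminf (\<lambda>n. endo (us n))"
  proof (cases "t = 0")
    case True
    show ?thesis
      unfolding True kliminf_def using bottom by (intro CollectI exI[of _ "\<lambda>n. (x, 0)"]) auto
  next
    case False
    have approx: "(x, p) \<in> kliminf (\<lambda>n. endo (us n))" if "p \<in> P" "p < t" for p
    proof -
      have "0 < p" "p < 1" using \<open>p \<in> P\<close> assms(2) by auto
      then have "x \<in> cut u p" using \<open>p < t\<close> t by (simp add: cut_eq_ge)
      then have "x \<in> kliminf (\<lambda>n. cut (us n) p)" using cuts \<open>p \<in> P\<close> by blast
      then obtain ys where ys: "\<And>n. ys n \<in> cut (us n) p" and "ys \<longlonglongrightarrow> x"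
        unfolding kliminf_def by blast
      then have "(\<lambda>n. (ys n, p)) \<longlonglongrightarrow> (x, p)" by (intro tendsto_Pair tendsto_const)
      moreover have "(ys n, p) \<in> endo (us n)" for n
        using ys[of n] \<open>0 < p\<close> \<open>p < 1\<close> by (simp add: cut_eq_ge)
      ultimately show ?thesis unfolding kliminf_def by (intro CollectI exI[of _ "\<lambda>n. (ys n, p)"]) auto
    qed
    have "(x, t) \<in> closure (kliminf (\<lambda>n. endo (us n)))"
      unfolding closure_approachable
    proof (intro allI impI)
      fix e :: real assume "e > 0"
      then have "0 \<le> max 0 (t - e) \<and> max 0 (t - e) < t \<and> t \<le> 1" using t False by auto
      then obtain p where "p \<in> P" "max 0 (t - e) < p" "p < t" using dense by blast
      then have "dist (x, p) (x, t) < e" by (simp add: dist_Pair_Pair dist_real_def)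
      with approx[OF \<open>p \<in> P\<close> \<open>p < t\<close>]
      show "\<exists>z\<in>kliminf (\<lambda>n. endo (us n)). dist z (x, t) < e" by blast
    qed
    then show ?thesis by (simp add: closure_closed[OF closed_kliminf])
  qed
qed

lemma klimsup_cut_subset:
  assumes "klimsup (\<lambda>n. endo (us n)) \<subseteq> endo u" and "0 < \<alpha>" "\<alpha> \<le> 1"
  shows "klimsup (\<lambda>n. cut (us n) \<alpha>) \<subseteq> cut u \<alpha>"
proof
  fix x assume "x \<in> klimsup (\<lambda>n. cut (us n) \<alpha>)"
  then obtain r xs where r: "strict_mono r" and xs: "\<And>j. xs j \<in> cut (us (r j)) \<alpha>"
    and "xs \<longlonglongrightarrow> x"
    unfolding klimsup_def by blast
  then have "(\<lambda>j. (xs j, \<alpha>)) \<longlonglongrightarrow> (x, \<alpha>)" by (intro tendsto_Pair tendsto_const)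
  moreover have "(xs j, \<alpha>) \<in> endo (us (r j))" for j
    using xs[of j] assms(2,3) by (simp add: cut_eq_ge)
  ultimately have "(x, \<alpha>) \<in> klimsup (\<lambda>n. endo (us n))"
    using r unfolding klimsup_def by (intro CollectI exI[of _ r] exI[of _ "\<lambda>j. (xs j, \<alpha>)"]) auto
  then have "(x, \<alpha>) \<in> endo u" using assms(1) by blast
  then show "x \<in> cut u \<alpha>" using assms(2) by (simp add: cut_eq_ge)
qed

lemma gt_subset_kliminf_cut:
  assumes "fuzzy u" and "endo u \<subseteq> kliminf (\<lambda>n. endo (us n))"
    and ne: "\<And>n. cut (us n) \<alpha> \<noteq> {}" and "0 < \<alpha>"
  shows "{x. \<alpha> < u x} \<subseteq> kliminf (\<lambda>n. cut (us n) \<alpha>)"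
proof clarify
  fix y assume "\<alpha> < u y"
  have "(y, u y) \<in> endo u" using \<open>fuzzy u\<close> unfolding fuzzy_def by simp
  then obtain zs where zs: "\<And>n. zs n \<in> endo (us n)" and lim: "zs \<longlonglongrightarrow> (y, u y)"
    using assms(2) unfolding kliminf_def by blast
  have "eventually (\<lambda>n. \<alpha> < snd (zs n)) sequentially"
    using order_tendstoD(1)[OF tendsto_snd[OF lim]] \<open>\<alpha> < u y\<close> by simp
  then have "eventually (\<lambda>n. fst (zs n) \<in> cut (us n) \<alpha>) sequentially"
  proof eventually_elim
    case (elim n)
    then show ?case using zs[of n] \<open>0 < \<alpha>\<close> by (cases "zs n") (simp add: cut_eq_ge)
  qed
  then show "y \<in> kliminf (\<lambda>n. cut (us n) \<alpha>)"
    using kliminf_eventually[OF ne _ tendsto_fst[OF lim]] by simp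
qed

lemma gamma_conv_if_kconv_cuts:
  fixes u :: "'a::metric_space \<Rightarrow> real"
  assumes "fuzzy u" and "\<And>n. fuzzy (us n)" and "P \<subseteq> {0<..<1}"
    and "\<forall>a b. 0 \<le> a \<and> a < b \<and> b \<le> 1 \<longrightarrow> (\<exists>p\<in>P. a < p \<and> p < b)"
    and "\<forall>\<alpha>\<in>P. kconv (\<lambda>n. cut (us n) \<alpha>) (cut u \<alpha>)"
  shows "gamma_conv us u"
proof -
  have "P \<subseteq> {0<..}" using assms(3) by auto
  have lower: "\<forall>\<alpha>\<in>P. cut u \<alpha> \<subseteq> kliminf (\<lambda>n. cut (us n) \<alpha>)"
    and upper: "\<forall>\<alpha>\<in>P. klimsup (\<lambda>n. cut (us n) \<alpha>) \<subseteq> cut u \<alpha>"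
    using assms(5) by (simp_all add: kconv_iff_subset)
  have "endo u \<subseteq> kliminf (\<lambda>n. endo (us n))"
    by (rule endo_subset_kliminf_endo[OF assms(2-4) lower])
  moreover have "klimsup (\<lambda>n. endo (us n)) \<subseteq> endo u"
    by (rule klimsup_endo_subset[OF assms(1) \<open>P \<subseteq> {0<..}\<close> assms(4) upper])
  ultimately show ?thesis unfolding gamma_conv_def kconv_iff_subset by (rule conjI)
qed

lemma kconv_cut_if_gamma_conv:
  fixes u :: "'a::metric_space \<Rightarrow> real"
  assumes u: "FUSC u" and us: "\<And>n. FUSC (us n)" and "gamma_conv us u"
    and \<alpha>: "\<alpha> \<in> {0<..<1} - platform_points u"
  shows "kconv (\<lambda>n. cut (us n) \<alpha>) (cut u \<alpha>)"
proof -
  have "0 < \<alpha>" "\<alpha> < 1" "\<alpha> \<notin> platform_points u" using \<alpha> by auto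
  have "fuzzy u" and "closed (cut u \<alpha>)"
    using u \<open>0 < \<alpha>\<close> \<open>\<alpha> < 1\<close> unfolding FUSC_def by simp_all
  have ne: "cut (us n) \<alpha> \<noteq> {}" for n
    using us[of n] \<open>0 < \<alpha>\<close> \<open>\<alpha> < 1\<close> unfolding FUSC_def by simp
  have endo_lims: "endo u \<subseteq> kliminf (\<lambda>n. endo (us n))" "klimsup (\<lambda>n. endo (us n)) \<subseteq> endo u"
    using \<open>gamma_conv us u\<close> unfolding gamma_conv_def kconv_iff_subset by blast+
  have "cut u \<alpha> = closure {x. \<alpha> < u x}"
    using closure_gt_eq_cut[OF \<open>closed (cut u \<alpha>)\<close> \<open>0 < \<alpha>\<close> \<open>\<alpha> < 1\<close> \<open>\<alpha> \<notin> platform_points u\<close>]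
    by (rule sym)
  also have "\<dots> \<subseteq> kliminf (\<lambda>n. cut (us n) \<alpha>)"
    using gt_subset_kliminf_cut[OF \<open>fuzzy u\<close> endo_lims(1) ne \<open>0 < \<alpha>\<close>] closed_kliminf
    by (rule closure_minimal)
  finally show ?thesis
    unfolding kconv_iff_subset
    using klimsup_cut_subset[OF endo_lims(2) \<open>0 < \<alpha>\<close> less_imp_le[OF \<open>\<alpha> < 1\<close>]]
    by (rule conjI)
qed

theorem theorem3p6:
  fixes u :: "'a::metric_space \<Rightarrow> real" and us :: "nat \<Rightarrow> 'a \<Rightarrow> real"
  assumes "FUSC u" and "\<And>n. FUSC (us n)"
  shows "(\<forall>P. P \<subseteq> {0<..<1} \<and> (\<forall>a b. 0 \<le> a \<and> a < b \<and> b \<le> 1 \<longrightarrow> (\<exists>p\<in>P. a < p \<and> p < b))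
              \<and> (\<forall>\<alpha>\<in>P. kconv (\<lambda>n. cut (us n) \<alpha>) (cut u \<alpha>))
           \<longrightarrow> gamma_conv us u)
       \<and> (gamma_conv us u \<longrightarrow>
           (\<forall>\<alpha>\<in>{0<..<1} - platform_points u. kconv (\<lambda>n. cut (us n) \<alpha>) (cut u \<alpha>)))"
proof (intro conjI impI allI ballI)
  fix P :: "real set"
  assume P: "P \<subseteq> {0<..<1} \<and> (\<forall>a b. 0 \<le> a \<and> a < b \<and> b \<le> 1 \<longrightarrow> (\<exists>p\<in>P. a < p \<and> p < b))
    \<and> (\<forall>\<alpha>\<in>P. kconv (\<lambda>n. cut (us n) \<alpha>) (cut u \<alpha>))"
  have "fuzzy u" "\<And>n. fuzzy (us n)" using assms by (simp_all add: FUSC_def)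
  moreover from P have "P \<subseteq> {0<..<1}"
    and "\<forall>a b. 0 \<le> a \<and> a < b \<and> b \<le> 1 \<longrightarrow> (\<exists>p\<in>P. a < p \<and> p < b)"
    and "\<forall>\<alpha>\<in>P. kconv (\<lambda>n. cut (us n) \<alpha>) (cut u \<alpha>)"
    by blast+
  ultimately show "gamma_conv us u" by (rule gamma_conv_if_kconv_cuts)
next
  fix \<alpha> assume "gamma_conv us u" "\<alpha> \<in> {0<..<1} - platform_points u"
  then show "kconv (\<lambda>n. cut (us n) \<alpha>) (cut u \<alpha>)" by (rule kconv_cut_if_gamma_conv[OF assms])
qed

end
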